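(* Let $(X,\mu)$ and $(Y,\nu)$ be measure spaces with positive measures $\mu,\nu$, and let $\mathcal F\subseteq L^1(X,\mu)\times L^1(Y,\nu)$ be a family of pairs of real-valued functions. Assume there exist real numbers $p,q>1$ and $a,b,c>0$ such that for every $(f,g)\in\mathcal F$: (i) $\|g\|_{L^\infty(Y,\nu)}\le a\|f\|_{L^1(X,\mu)}$; (ii) $\|g\|_{L^q(Y,\nu)}\le b\|f\|_{L^p(X,\mu)}$; (iii) $\|f\|_{L^p(X,\mu)}\le c\|g\|_{L^q(Y,\nu)}$; (iv) $\int_X f\,d\mu\le 0$ and $\int_Y g\,d\nu\le 0$. Then for every $(f,g)\in\mathcal F$ with $(f,g)\neq(0,0)$, $$\mu(\{x\in X: f(x)<0\})^{1/p'}\,\nu(\{y\in Y: g(y)<0\})^{1/q}\ \ge\ a^{-1}b^{-q'/q}(2c)^{-q'},$$ where $p'=p/(p-1)$ and $q'=q/(q-1)$. *)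

theory Defs
  imports "HOL-Analysis.Analysis" "HOL-Probability.Essential_Supremum"
begin

text \<open>Real powers of extended nonnegative reals (with \<open>\<infinity> powr r = \<infinity>\<close>, used for r > 0).\<close>
definition enn_powr :: "ennreal \<Rightarrow> real \<Rightarrow> ennreal" where
  "enn_powr x r = (if x = \<infinity> then \<infinity> else ennreal (enn2real x powr r))"

definition Lp_norm :: "'a measure \<Rightarrow> real \<Rightarrow> ('a \<Rightarrow> real) \<Rightarrow> ennreal" where
  "Lp_norm M p f = enn_powr (\<integral>\<^sup>+ x. ennreal (\<bar>f x\<bar> powr p) \<partial>M) (1 / p)"

definition Linf_norm :: "'a measure \<Rightarrow> ('a \<Rightarrow> real) \<Rightarrow> ennreal" where
  "Linf_norm M f = esssup M (\<lambda>x. ennreal \<bar>f x\<bar>)"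

end

theory Submission
  imports Defs
begin

text \<open>Write A = {f < 0} and B = {g < 0}. Since the integral of f is nonpositive,
  ||f||_1 <= 2 int_A |f| <= 2 mu(A)^(1/p') ||f||_p by Hoelder; since the integral of g is
  nonpositive and |g| <= ||g||_inf, also ||g||_q^q <= ||g||_inf^(q-1) ||g||_1
  <= 2 ||g||_inf^q nu(B). Chaining (i) and (iii) through these two estimates gives
  1 <= 2^(1+1/q) a c mu(A)^(1/p') nu(B)^(1/q), while (ii) and (iii) force b c >= 1; the
  stated constant is dominated by 1/(2^(1+1/q) a c) because q' >= 1 + 1/q.\<close>

lemma enn_powr_ennreal: "0 \<le> x \<Longrightarrow> enn_powr (ennreal x) r = ennreal (x powr r)"
  by (simp add: enn_powr_def)

lemma enn_powr_eq_0_iff: "r > 0 \<Longrightarrow> enn_powr X r = 0 \<longleftrightarrow> X = 0"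
  by (cases X) (auto simp: enn_powr_def)

lemma ennreal_le_enn_powr_mult:
  assumes "r > 0" "s > 0" "X > 0" "Y > 0"
    and fin: "X < \<infinity> \<Longrightarrow> Y < \<infinity> \<Longrightarrow> K \<le> enn2real X powr r * enn2real Y powr s"
  shows "ennreal K \<le> enn_powr X r * enn_powr Y s"
proof (cases "X = \<infinity> \<or> Y = \<infinity>")
  case True
  have "enn_powr X r \<noteq> 0" "enn_powr Y s \<noteq> 0"
    using assms by (simp_all add: enn_powr_eq_0_iff)
  with True have "enn_powr X r * enn_powr Y s = \<infinity>"
    by (auto simp: enn_powr_def ennreal_mult_eq_top_iff)
  then show ?thesis by simp
next
  case False
  then have "enn_powr X r * enn_powr Y s = ennreal (enn2real X powr r * enn2real Y powr s)"
    by (simp add: enn_powr_def ennreal_mult)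
  with False fin show ?thesis by (simp add: less_top ennreal_leI)
qed

lemma Lp_norm_eq_integral:
  fixes f :: "'a \<Rightarrow> real"
  assumes "integrable M (\<lambda>x. \<bar>f x\<bar> powr p)"
  shows "Lp_norm M p f = ennreal ((\<integral>x. \<bar>f x\<bar> powr p \<partial>M) powr (1/p))"
  unfolding Lp_norm_def using assms
  by (subst nn_integral_eq_integral) (auto intro!: enn_powr_ennreal integral_nonneg_AE)

lemma Lp_norm_one: "integrable M f \<Longrightarrow> Lp_norm M 1 f = ennreal (\<integral>x. \<bar>f x\<bar> \<partial>M)"
  using Lp_norm_eq_integral[of M f 1] by simp

lemma Lp_norm_eq_0_iff_AE:
  fixes f :: "'a \<Rightarrow> real"
  assumes [measurable]: "f \<in> borel_measurable M" and "p > 0"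
  shows "Lp_norm M p f = 0 \<longleftrightarrow> (AE x in M. f x = 0)"
proof -
  have "Lp_norm M p f = 0 \<longleftrightarrow> (\<integral>\<^sup>+ x. ennreal (\<bar>f x\<bar> powr p) \<partial>M) = 0"
    using \<open>p > 0\<close> by (simp add: Lp_norm_def enn_powr_eq_0_iff)
  also have "\<dots> \<longleftrightarrow> (AE x in M. f x = 0)"
    by (simp add: nn_integral_0_iff_AE)
  finally show ?thesis .
qed

lemma integrable_abs_powr_if_Lp_norm_finite:
  fixes f :: "'a \<Rightarrow> real"
  assumes [measurable]: "f \<in> borel_measurable M" and "Lp_norm M p f < \<infinity>"
  shows "integrable M (\<lambda>x. \<bar>f x\<bar> powr p)"
proof (rule integrableI_nonneg)
  show "(\<integral>\<^sup>+ x. ennreal (\<bar>f x\<bar> powr p) \<partial>M) < \<infinity>"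
    using assms(2) by (auto simp: Lp_norm_def enn_powr_def top.not_eq_extremum split: if_splits)
qed auto

lemma AE_abs_le_if_Linf_norm_le:
  fixes f :: "'a \<Rightarrow> real"
  assumes "Linf_norm M f \<le> ennreal K" "0 \<le> K"
  shows "AE x in M. \<bar>f x\<bar> \<le> K"
  using esssup_AE[of "\<lambda>x. ennreal \<bar>f x\<bar>" M]
  by eventually_elim (use assms in \<open>auto simp: Linf_norm_def dest: order_trans\<close>)

lemma integral_abs_powr_eq_0_iff:
  fixes f :: "'a \<Rightarrow> real"
  assumes "integrable M (\<lambda>x. \<bar>f x\<bar> powr p)"
  shows "(\<integral>x. \<bar>f x\<bar> powr p \<partial>M) = 0 \<longleftrightarrow> (AE x in M. f x = 0)"
  using integral_nonneg_eq_0_iff_AE[OF assms] by simp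

lemma integral_abs_le_twice_integral_negative_part:
  fixes h :: "'a \<Rightarrow> real"
  assumes h: "integrable M h" and "(\<integral>x. h x \<partial>M) \<le> 0"
  shows "(\<integral>x. \<bar>h x\<bar> \<partial>M) \<le> 2 * (\<integral>x. indicator {x\<in>space M. h x < 0} x * \<bar>h x\<bar> \<partial>M)"
proof -
  define A where "A = {x\<in>space M. h x < 0}"
  have "A \<in> sets M" using h unfolding A_def by measurable
  then have hA: "integrable M (\<lambda>x. indicator A x * \<bar>h x\<bar>)"
    using integrable_mult_indicator[OF _ integrable_abs[OF h]] by simp
  have "(\<integral>x. \<bar>h x\<bar> \<partial>M) = (\<integral>x. 2 * (indicator A x * \<bar>h x\<bar>) + h x \<partial>M)"
    by (rule Bochner_Integration.integral_cong) (auto simp: A_def indicator_def)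
  also have "\<dots> = 2 * (\<integral>x. indicator A x * \<bar>h x\<bar> \<partial>M) + (\<integral>x. h x \<partial>M)"
    using hA h by simp
  finally show ?thesis using assms(2) by (simp add: A_def)
qed

lemma emeasure_negative_set_pos:
  fixes h :: "'a \<Rightarrow> real"
  assumes h: "integrable M h" and "(\<integral>x. h x \<partial>M) \<le> 0" and "\<not> (AE x in M. h x = 0)"
  shows "emeasure M {x\<in>space M. h x < 0} > 0"
proof (rule ccontr)
  have [measurable]: "h \<in> borel_measurable M" using h by auto
  assume "\<not> ?thesis"
  then have "AE x in M. 0 \<le> h x"
    by (subst AE_iff_measurable[OF _ refl]) (auto simp: not_le)
  moreover from this have "(\<integral>x. h x \<partial>M) = 0"
    using assms(2) integral_nonneg_AE[where M=M and f=h] by simp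
  ultimately show False
    using integral_nonneg_eq_0_iff_AE[OF h] assms(3) by simp
qed

lemma integral_indicator_abs_le_Holder:
  fixes f :: "'a \<Rightarrow> real"
  assumes f: "integrable M f" and fp: "integrable M (\<lambda>x. \<bar>f x\<bar> powr p)" and p: "p > 1"
    and A: "A \<in> sets M" "emeasure M A < \<infinity>"
  shows "(\<integral>x. indicator A x * \<bar>f x\<bar> \<partial>M)
    \<le> measure M A powr (1 - 1/p) * (\<integral>x. \<bar>f x\<bar> powr p \<partial>M) powr (1/p)"
proof -
  define P where "P = (\<integral>x. \<bar>f x\<bar> powr p \<partial>M)"
  define m where "m = measure M A"
  have fA: "integrable M (\<lambda>x. indicator A x * \<bar>f x\<bar>)"
    using integrable_mult_indicator[OF A(1) integrable_abs[OF f]] by simp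
  have "P \<ge> 0" "m \<ge> 0" unfolding P_def m_def by (auto intro: integral_nonneg_AE)
  then consider "m = 0 \<or> P = 0" | "m > 0" "P > 0" by fastforce
  then show ?thesis
  proof cases
    case 1
    have "AE x in M. indicator A x * \<bar>f x\<bar> = 0"
    proof (cases "m = 0")
      case True
      then have "A \<in> null_sets M"
        using A by (simp add: m_def emeasure_eq_ennreal_measure less_top null_sets_def)
      from AE_not_in[OF this] show ?thesis by eventually_elim simp
    next
      case False
      with 1 have "AE x in M. f x = 0"
        using integral_abs_powr_eq_0_iff[OF fp] by (simp add: P_def)
      then show ?thesis by eventually_elim simp
    qed
    then have "(\<integral>x. indicator A x * \<bar>f x\<bar> \<partial>M) = 0" by (rule integral_eq_zero_AE)
    then show ?thesis by simp
  next
    case 2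
    define p' where "p' = p / (p - 1)"
    define K1 where "K1 = P powr (1/p)"
    define K2 where "K2 = m powr (1 - 1/p)"
    have p': "p' > 1" "1/p + 1/p' = 1" "(1 - 1/p) * p' = 1"
      using p by (auto simp: p'_def field_simps)
    have K: "K1 > 0" "K2 > 0" using 2 by (auto simp: K1_def K2_def)
    have K1p: "K1 powr p = P" using 2 p by (simp add: K1_def powr_powr)
    have K2p: "K2 powr p' = m" using 2 p' by (simp add: K2_def powr_powr)
    \<comment> \<open>Young's inequality for the normalised functions |f|/K1 and 1_A/K2\<close>
    have Young: "indicator A x * \<bar>f x\<bar> / (K1 * K2) \<le> \<bar>f x\<bar> powr p / (P * p) + indicator A x / (m * p')" for x
    proof -
      have "(\<bar>f x\<bar>/K1) * (indicator A x / K2) \<le> (\<bar>f x\<bar>/K1) powr p / p + (indicator A x / K2) powr p' / p'"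
        using K p p' by (intro Youngs_inequality) auto
      moreover have "(\<bar>f x\<bar>/K1) powr p = \<bar>f x\<bar> powr p / P"
        using K by (simp add: powr_divide K1p)
      moreover have "(indicator A x / K2) powr p' = indicator A x / m"
        using K K2p by (auto simp: indicator_def powr_divide)
      ultimately show ?thesis by (simp add: field_simps)
    qed
    have "(\<integral>x. indicator A x * \<bar>f x\<bar> / (K1 * K2) \<partial>M)
        \<le> (\<integral>x. \<bar>f x\<bar> powr p / (P * p) + indicator A x / (m * p') \<partial>M)"
      using fA fp A Young by (intro integral_mono) auto
    also have "\<dots> = P / (P * p) + m / (m * p')"
      using fp A by (simp add: P_def m_def)
    also have "\<dots> = 1" using 2 p p' by (simp add: field_simps)
    finally have "(\<integral>x. indicator A x * \<bar>f x\<bar> \<partial>M) / (K1 * K2) \<le> 1" by simp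
    then show ?thesis using K by (simp add: field_simps K1_def K2_def P_def m_def)
  qed
qed

lemma abs_powr_le_bound_powr_mult:
  fixes y G q :: real
  assumes "\<bar>y\<bar> \<le> G" "q \<ge> 1"
  shows "\<bar>y\<bar> powr q \<le> G powr (q - 1) * \<bar>y\<bar>"
proof (cases "y = 0")
  case False
  then have "\<bar>y\<bar> powr q = \<bar>y\<bar> powr (q - 1) * \<bar>y\<bar>"
    using powr_add[of "\<bar>y\<bar>" "q - 1" 1] by simp
  also have "\<dots> \<le> G powr (q - 1) * \<bar>y\<bar>"
    using assms by (intro mult_right_mono powr_mono2) auto
  finally show ?thesis .
qed simp

lemma integrable_abs_powr_if_AE_bounded:
  fixes g :: "'a \<Rightarrow> real"
  assumes g: "integrable M g" and "q \<ge> 1" and "AE x in M. \<bar>g x\<bar> \<le> G"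
  shows "integrable M (\<lambda>x. \<bar>g x\<bar> powr q)"
proof (rule Bochner_Integration.integrable_bound)
  show "integrable M (\<lambda>x. G powr (q - 1) * \<bar>g x\<bar>)" using g by auto
  show "AE x in M. norm (\<bar>g x\<bar> powr q) \<le> norm (G powr (q - 1) * \<bar>g x\<bar>)"
    using assms(3) by eventually_elim (use assms(2) abs_powr_le_bound_powr_mult in auto)
qed (use g in auto)

lemma integral_abs_powr_le_measure_negative_set:
  fixes g :: "'a \<Rightarrow> real"
  assumes g: "integrable M g" "(\<integral>x. g x \<partial>M) \<le> 0" and q: "q \<ge> 1" and G: "G \<ge> 0"
    and bound: "AE x in M. \<bar>g x\<bar> \<le> G" and fin: "emeasure M {x\<in>space M. g x < 0} < \<infinity>"
  shows "(\<integral>x. \<bar>g x\<bar> powr q \<partial>M) \<le> 2 * G powr q * measure M {x\<in>space M. g x < 0}"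
proof -
  define B where "B = {x\<in>space M. g x < 0}"
  have B: "B \<in> sets M" using g unfolding B_def by measurable
  have gB: "integrable M (\<lambda>x. indicator B x * \<bar>g x\<bar>)"
    using integrable_mult_indicator[OF B integrable_abs[OF g(1)]] by simp
  have GB: "integrable M (\<lambda>x. indicator B x * G)" using B fin by (auto simp: B_def)
  have "(\<integral>x. \<bar>g x\<bar> powr q \<partial>M) \<le> (\<integral>x. G powr (q - 1) * \<bar>g x\<bar> \<partial>M)"
    using bound g(1) integrable_abs_powr_if_AE_bounded[OF g(1) q bound]
    by (intro integral_mono_AE) (auto elim!: eventually_mono intro: abs_powr_le_bound_powr_mult q)
  also have "\<dots> = G powr (q - 1) * (\<integral>x. \<bar>g x\<bar> \<partial>M)" by simp
  also have "\<dots> \<le> G powr (q - 1) * (2 * (\<integral>x. indicator B x * \<bar>g x\<bar> \<partial>M))"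
    using integral_abs_le_twice_integral_negative_part[OF g] by (intro mult_left_mono) (auto simp: B_def)
  also have "(\<integral>x. indicator B x * \<bar>g x\<bar> \<partial>M) \<le> (\<integral>x. indicator B x * G \<partial>M)"
    using bound by (intro integral_mono_AE[OF gB GB]) (auto simp: indicator_def elim!: eventually_mono)
  also have "(\<integral>x. indicator B x * G \<partial>M) = measure M B * G" using B fin by (simp add: B_def)
  also have "G powr (q - 1) * (2 * (measure M B * G)) = 2 * (G powr (q - 1) * G) * measure M B"
    by simp
  also have "G powr (q - 1) * G = G powr q"
    using G powr_add[of G "q - 1" 1] by (cases "G = 0") simp_all
  finally show ?thesis by (simp add: B_def mult_left_mono)
qed

lemma uncertainty_constant_le:
  fixes a b c q t :: real
  assumes pos: "a > 0" "b > 0" "c > 0" "q > 1"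
    and bc: "1 \<le> b * c" and key: "1 \<le> 2 powr (1 + 1/q) * a * c * t"
  shows "inverse a * b powr (- (q / (q - 1)) / q) * (2 * c) powr (- (q / (q - 1))) \<le> t"
proof -
  define r where "r = q / (q - 1)"
  have r: "r / q - r = -1" "1 + 1/q \<le> r" using pos by (auto simp: r_def field_simps)
  have "b powr (- r / q) \<le> (1 / c) powr (- r / q)"
    using pos bc r by (intro powr_mono2') (auto simp: field_simps)
  also have "\<dots> = c powr (r / q)" using pos by (simp add: powr_divide powr_minus_divide)
  finally have b_le: "b powr (- r / q) \<le> c powr (r / q)" .
  have c_eq: "c powr (r / q) * c powr (- r) = 1 / c"
    using pos r(1) powr_add[of c "r / q" "- r"] by (simp add: powr_minus_divide)
  have "2 powr (- r) \<le> 2 powr (- (1 + 1/q))" using r by (intro powr_mono) auto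
  also have "\<dots> = 1 / 2 powr (1 + 1/q)" by (rule powr_minus_divide)
  finally have two_le: "2 powr (- r) \<le> 1 / 2 powr (1 + 1/q)" .
  have "inverse a * b powr (- r / q) * (2 * c) powr (- r)
      \<le> inverse a * c powr (r / q) * (2 powr (- r) * c powr (- r))"
    unfolding powr_mult[of 2 c, simplified] using b_le pos
    by (intro mult_right_mono mult_left_mono) auto
  also have "\<dots> = inverse a * (c powr (r / q) * c powr (- r)) * 2 powr (- r)"
    by (simp only: mult_ac)
  also have "\<dots> = inverse a * (1 / c) * 2 powr (- r)" by (simp only: c_eq)
  also have "\<dots> \<le> inverse a * (1 / c) * (1 / 2 powr (1 + 1/q))"
    using two_le pos by (intro mult_left_mono) auto
  also have "\<dots> \<le> t" using key pos by (simp add: field_simps)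
  finally show ?thesis by (simp add: r_def)
qed

lemma measure_negative_sets_lower_bound:
  fixes f :: "'a \<Rightarrow> real" and g :: "'b \<Rightarrow> real" and p q a b c :: real
  assumes f: "integrable M f" "(\<integral>x. f x \<partial>M) \<le> 0"
    and g: "integrable N g" "(\<integral>y. g y \<partial>N) \<le> 0"
    and p: "p > 1" and q: "q > 1" and a: "a > 0" and b: "b > 0" and c: "c > 0"
    and fp: "integrable M (\<lambda>x. \<bar>f x\<bar> powr p)"
    and i: "AE y in N. \<bar>g y\<bar> \<le> a * (\<integral>x. \<bar>f x\<bar> \<partial>M)"
    and ii: "(\<integral>y. \<bar>g y\<bar> powr q \<partial>N) powr (1/q) \<le> b * (\<integral>x. \<bar>f x\<bar> powr p \<partial>M) powr (1/p)"
    and iii: "(\<integral>x. \<bar>f x\<bar> powr p \<partial>M) powr (1/p) \<le> c * (\<integral>y. \<bar>g y\<bar> powr q \<partial>N) powr (1/q)"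
    and f_nonzero: "\<not> (AE x in M. f x = 0)"
    and finA: "emeasure M {x \<in> space M. f x < 0} < \<infinity>"
    and finB: "emeasure N {y \<in> space N. g y < 0} < \<infinity>"
  shows "inverse a * b powr (- (q / (q - 1)) / q) * (2 * c) powr (- (q / (q - 1)))
    \<le> measure M {x \<in> space M. f x < 0} powr (1 - 1/p) * measure N {y \<in> space N. g y < 0} powr (1/q)"
proof -
  define A where "A = {x \<in> space M. f x < 0}"
  define B where "B = {y \<in> space N. g y < 0}"
  have A: "A \<in> sets M" using f unfolding A_def by measurable
  define F1 where "F1 = (\<integral>x. \<bar>f x\<bar> \<partial>M)"
  define Fp where "Fp = (\<integral>x. \<bar>f x\<bar> powr p \<partial>M) powr (1/p)"
  define Gq where "Gq = (\<integral>y. \<bar>g y\<bar> powr q \<partial>N) powr (1/q)"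
  define \<alpha> where "\<alpha> = measure M A powr (1 - 1/p)"
  define \<beta> where "\<beta> = measure N B powr (1/q)"
  have "(\<integral>x. \<bar>f x\<bar> powr p \<partial>M) \<noteq> 0"
    using f_nonzero integral_abs_powr_eq_0_iff[OF fp] by simp
  then have "Fp > 0" by (simp add: Fp_def)
  with iii have "0 < c * Gq" unfolding Fp_def Gq_def by linarith
  then have Gq_pos: "Gq > 0" using c by (simp add: zero_less_mult_iff)
  have F1_le: "F1 \<le> 2 * (\<alpha> * Fp)"
    using integral_abs_le_twice_integral_negative_part[OF f]
      integral_indicator_abs_le_Holder[OF f(1) fp p A finA[folded A_def]]
    by (simp add: F1_def A_def \<alpha>_def Fp_def)
  have Gq_le: "Gq \<le> 2 powr (1/q) * (a * F1) * \<beta>"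
  proof -
    have "F1 \<ge> 0" by (simp add: F1_def)
    then have aF1: "a * F1 \<ge> 0" using a by simp
    have "(\<integral>y. \<bar>g y\<bar> powr q \<partial>N) \<le> 2 * (a * F1) powr q * measure N B"
      using integral_abs_powr_le_measure_negative_set[OF g _ aF1 i[folded F1_def] finB] q
      by (simp add: B_def)
    then have "Gq \<le> (2 * (a * F1) powr q * measure N B) powr (1/q)"
      unfolding Gq_def using q by (intro powr_mono2) (auto intro: integral_nonneg_AE)
    also have "\<dots> = 2 powr (1/q) * (a * F1) * \<beta>"
      using aF1 \<open>F1 \<ge> 0\<close> a q by (simp add: powr_mult powr_powr \<beta>_def)
    finally show ?thesis .
  qed
  have "Gq \<le> b * Fp" using ii by (simp add: Fp_def Gq_def)
  also have "\<dots> \<le> b * (c * Gq)" using iii b by (simp add: Fp_def Gq_def)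
  finally have "Gq * 1 \<le> Gq * (b * c)" by (simp add: algebra_simps)
  then have bc: "1 \<le> b * c" using Gq_pos by simp
  have "Gq \<le> 2 powr (1/q) * (a * F1) * \<beta>" by (fact Gq_le)
  also have "\<dots> \<le> 2 powr (1/q) * (a * (2 * (\<alpha> * Fp))) * \<beta>"
    using F1_le a by (intro mult_right_mono mult_left_mono) (auto simp: \<beta>_def)
  also have "\<dots> \<le> 2 powr (1/q) * (a * (2 * (\<alpha> * (c * Gq)))) * \<beta>"
    using iii a by (intro mult_right_mono mult_left_mono) (auto simp: \<alpha>_def \<beta>_def Fp_def Gq_def)
  finally have "Gq * 1 \<le> Gq * (2 powr (1 + 1/q) * a * c * (\<alpha> * \<beta>))"
    by (simp add: powr_add algebra_simps)
  then have key: "1 \<le> 2 powr (1 + 1/q) * a * c * (\<alpha> * \<beta>)" using Gq_pos by simp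
  show ?thesis
    using uncertainty_constant_le[OF a b c q bc key] by (simp add: \<alpha>_def \<beta>_def A_def B_def)
qed

lemma emeasure_negative_sets_lower_bound:
  fixes f :: "'a \<Rightarrow> real" and g :: "'b \<Rightarrow> real" and p q a b c :: real
  assumes f: "integrable M f" "(\<integral>x. f x \<partial>M) \<le> 0"
    and g: "integrable N g" "(\<integral>y. g y \<partial>N) \<le> 0"
    and p: "p > 1" and q: "q > 1" and a: "a > 0" and b: "b > 0" and c: "c > 0"
    and i: "Linf_norm N g \<le> ennreal a * Lp_norm M 1 f"
    and ii: "Lp_norm N q g \<le> ennreal b * Lp_norm M p f"
    and iii: "Lp_norm M p f \<le> ennreal c * Lp_norm N q g"
    and nonzero: "\<not> ((AE x in M. f x = 0) \<and> (AE y in N. g y = 0))"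
  shows "ennreal (inverse a * b powr (- (q / (q - 1)) / q) * (2 * c) powr (- (q / (q - 1))))
    \<le> enn_powr (emeasure M {x \<in> space M. f x < 0}) (1 / (p / (p - 1)))
      * enn_powr (emeasure N {y \<in> space N. g y < 0}) (1 / q)"
proof -
  have [measurable]: "f \<in> borel_measurable M" "g \<in> borel_measurable N" using f g by auto
  have g_bound_L1: "AE y in N. \<bar>g y\<bar> \<le> a * (\<integral>x. \<bar>f x\<bar> \<partial>M)"
    using i a by (intro AE_abs_le_if_Linf_norm_le) (simp_all add: Lp_norm_one[OF f(1)] ennreal_mult)
  have f_nonzero: "\<not> (AE x in M. f x = 0)"
  proof
    assume "AE x in M. f x = 0"
    then have "Linf_norm N g \<le> ennreal 0" using i Lp_norm_eq_0_iff_AE[of f M 1] by simp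
    then have "AE y in N. \<bar>g y\<bar> \<le> 0" by (rule AE_abs_le_if_Linf_norm_le) simp
    with nonzero \<open>AE x in M. f x = 0\<close> show False by (auto elim: eventually_mono)
  qed
  have g_nonzero: "\<not> (AE y in N. g y = 0)"
  proof
    assume "AE y in N. g y = 0"
    then have "Lp_norm M p f = 0" using iii q Lp_norm_eq_0_iff_AE[of g N q] by simp
    with f_nonzero show False using p Lp_norm_eq_0_iff_AE[of f M p] by simp
  qed
  show ?thesis
  proof (rule ennreal_le_enn_powr_mult)
    show "0 < 1 / (p / (p - 1))" "0 < 1 / q" using p q by simp_all
    show "emeasure M {x \<in> space M. f x < 0} > 0" by (rule emeasure_negative_set_pos[OF f f_nonzero])
    show "emeasure N {y \<in> space N. g y < 0} > 0" by (rule emeasure_negative_set_pos[OF g g_nonzero])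
    assume finA: "emeasure M {x \<in> space M. f x < 0} < \<infinity>"
      and finB: "emeasure N {y \<in> space N. g y < 0} < \<infinity>"
    have gq: "integrable N (\<lambda>y. \<bar>g y\<bar> powr q)"
      using integrable_abs_powr_if_AE_bounded[OF g(1) _ g_bound_L1] q by simp
    have "Lp_norm M p f < \<infinity>"
      using iii by (simp add: Lp_norm_eq_integral[OF gq] ennreal_mult_less_top le_less_trans)
    then have fp: "integrable M (\<lambda>x. \<bar>f x\<bar> powr p)" by (rule integrable_abs_powr_if_Lp_norm_finite[rotated]) simp
    have ii': "(\<integral>y. \<bar>g y\<bar> powr q \<partial>N) powr (1/q) \<le> b * (\<integral>x. \<bar>f x\<bar> powr p \<partial>M) powr (1/p)"
      using ii b by (simp add: Lp_norm_eq_integral[OF gq] Lp_norm_eq_integral[OF fp] flip: ennreal_mult)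
    have iii': "(\<integral>x. \<bar>f x\<bar> powr p \<partial>M) powr (1/p) \<le> c * (\<integral>y. \<bar>g y\<bar> powr q \<partial>N) powr (1/q)"
      using iii c by (simp add: Lp_norm_eq_integral[OF gq] Lp_norm_eq_integral[OF fp] flip: ennreal_mult)
    have "1 / (p / (p - 1)) = 1 - 1/p" using p by (simp add: field_simps)
    then show "inverse a * b powr (- (q / (q - 1)) / q) * (2 * c) powr (- (q / (q - 1)))
      \<le> enn2real (emeasure M {x \<in> space M. f x < 0}) powr (1 / (p / (p - 1)))
        * enn2real (emeasure N {y \<in> space N. g y < 0}) powr (1 / q)"
      using measure_negative_sets_lower_bound[OF f g p q a b c fp g_bound_L1 ii' iii' f_nonzero finA finB]
      by (simp add: measure_def)
  qed
qed

theorem mainTheorem1: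
  fixes M :: "'a measure" and N :: "'b measure"
    and F :: "(('a \<Rightarrow> real) \<times> ('b \<Rightarrow> real)) set"
    and p q a b c :: real
  assumes F_L1: "\<forall>(f, g) \<in> F. integrable M f \<and> integrable N g"
    and p: "p > 1" and q: "q > 1"
    and a: "a > 0" and b: "b > 0" and c: "c > 0"
    and i: "\<forall>(f, g) \<in> F. Linf_norm N g \<le> ennreal a * Lp_norm M 1 f"
    and ii: "\<forall>(f, g) \<in> F. Lp_norm N q g \<le> ennreal b * Lp_norm M p f"
    and iii: "\<forall>(f, g) \<in> F. Lp_norm M p f \<le> ennreal c * Lp_norm N q g"
    and iv: "\<forall>(f, g) \<in> F. (\<integral>x. f x \<partial>M) \<le> 0 \<and> (\<integral>y. g y \<partial>N) \<le> 0"
  shows "\<forall>(f, g) \<in> F. \<not> ((AE x in M. f x = 0) \<and> (AE y in N. g y = 0)) \<longrightarrow>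
           enn_powr (emeasure M {x \<in> space M. f x < 0}) (1 / (p / (p - 1)))
             * enn_powr (emeasure N {y \<in> space N. g y < 0}) (1 / q)
           \<ge> ennreal (inverse a * b powr (- (q / (q - 1)) / q) * (2 * c) powr (- (q / (q - 1))))"
proof (intro ballI impI, clarify)
  fix f g assume "(f, g) \<in> F" and "\<not> ((AE x in M. f x = 0) \<and> (AE y in N. g y = 0))"
  with assms show "enn_powr (emeasure M {x \<in> space M. f x < 0}) (1 / (p / (p - 1)))
      * enn_powr (emeasure N {y \<in> space N. g y < 0}) (1 / q)
    \<ge> ennreal (inverse a * b powr (- (q / (q - 1)) / q) * (2 * c) powr (- (q / (q - 1))))"
    by (intro emeasure_negative_sets_lower_bound) auto
qed

end
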